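(* Let $\triangle$ be an apexed triangle and $f_\triangle:\mathbb{R}^2\to\mathbb{R}$ the associated distance function. Then for all $x_1,x_2\in\mathbb{R}^2$, $|f_\triangle(x_1)-f_\triangle(x_2)|\le\|x_1-x_2\|$.
   Context: $\|\cdot\|$ is the Euclidean norm and $\langle\cdot,\cdot\rangle$ the Euclidean inner product in $\mathbb{R}^2$. An apexed triangle $\triangle$ (in a simple polygon $P$ with sites $S$ and geodesic distance $d$) is a triangle with corners $a$ (apex), $b,c$ (so $0<\angle bac<\pi$), together with a site $s$ (definer); only $a,b,c$ and the constant $d(a,s)$ matter here. Let $u_1=(b-a)/\|b-a\|$ and $u_2=(c-a)/\|c-a\|$. Let $R_{in}=\{a+\lambda u_1+\mu u_2:\lambda,\mu\ge0\}$. Let $L=\{x\notin R_{in}:\langle x-a,u_1\rangle\ge\langle x-a,u_2\rangle\}$ and $R=\{x\notin R_{in}:\langle x-a,u_2\rangle>\langle x-a,u_1\rangle\}$ (so $L$ and $R$ are separated by the halfline from $a$ bisecting the angle at $a$ that points away from $\triangle$). Split $L$ into $L_{top}=\{x\in L:\langle x-a,u_1\rangle<0\}$ and $L_{side}=L\setminus L_{top}$, and similarly $R_{top}=\{x\in R:\langle x-a,u_2\rangle<0\}$, $R_{side}=R\setminus R_{top}$. For $x\in L$ let $\hat x$ be the orthogonal projection of $x$ onto the line through $a$ with direction $u_1$; for $x\in R$ let $\hat x$ be the orthogonal projection onto the line through $a$ with direction $u_2$; for $x\in R_{in}$ let $\hat x=x$. Define $f_\triangle(x)=d(a,s)-\|\hat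 x-a\|$ if $x\in L_{top}\cup R_{top}$, and $f_\triangle(x)=d(a,s)+\|\hat x-a\|$ otherwise. *)

theory Defs
  imports "HOL-Analysis.Analysis"
begin

text \<open>Points of the plane are vectors of type real^2. An apexed triangle is given by
its apex a, corners b c, and the constant D = d(a,s) (geodesic distance from the apex
to the definer site).\<close>

definition angle_at :: "real^2 \<Rightarrow> real^2 \<Rightarrow> real^2 \<Rightarrow> real" where
  "angle_at b a c = arccos (((b - a) \<bullet> (c - a)) / (norm (b - a) * norm (c - a)))"

definition dir1 :: "real^2 \<Rightarrow> real^2 \<Rightarrow> real^2" where
  "dir1 a b = (1 / norm (b - a)) *\<^sub>R (b - a)"

definition Rin :: "real^2 \<Rightarrow> real^2 \<Rightarrow> real^2 \<Rightarrow> (real^2) set" where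
  "Rin a b c = {a + l *\<^sub>R dir1 a b + m *\<^sub>R dir1 a c | l m. l \<ge> 0 \<and> m \<ge> 0}"

definition Lreg :: "real^2 \<Rightarrow> real^2 \<Rightarrow> real^2 \<Rightarrow> (real^2) set" where
  "Lreg a b c = {x. x \<notin> Rin a b c \<and> (x - a) \<bullet> dir1 a b \<ge> (x - a) \<bullet> dir1 a c}"

definition Rreg :: "real^2 \<Rightarrow> real^2 \<Rightarrow> real^2 \<Rightarrow> (real^2) set" where
  "Rreg a b c = {x. x \<notin> Rin a b c \<and> (x - a) \<bullet> dir1 a c > (x - a) \<bullet> dir1 a b}"

definition Ltop :: "real^2 \<Rightarrow> real^2 \<Rightarrow> real^2 \<Rightarrow> (real^2) set" where
  "Ltop a b c = {x \<in> Lreg a b c. (x - a) \<bullet> dir1 a b < 0}"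

definition Rtop :: "real^2 \<Rightarrow> real^2 \<Rightarrow> real^2 \<Rightarrow> (real^2) set" where
  "Rtop a b c = {x \<in> Rreg a b c. (x - a) \<bullet> dir1 a c < 0}"

definition proj_line :: "real^2 \<Rightarrow> real^2 \<Rightarrow> real^2 \<Rightarrow> real^2" where
  "proj_line a u x = a + ((x - a) \<bullet> u) *\<^sub>R u"

definition hat :: "real^2 \<Rightarrow> real^2 \<Rightarrow> real^2 \<Rightarrow> real^2 \<Rightarrow> real^2" where
  "hat a b c x =
     (if x \<in> Lreg a b c then proj_line a (dir1 a b) x
      else if x \<in> Rreg a b c then proj_line a (dir1 a c) x
      else x)"

definition f_tri :: "real^2 \<Rightarrow> real^2 \<Rightarrow> real^2 \<Rightarrow> real \<Rightarrow> real^2 \<Rightarrow> real" where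
  "f_tri a b c D x =
     (if x \<in> Ltop a b c \<union> Rtop a b c then D - norm (hat a b c x - a)
      else D + norm (hat a b c x - a))"

end

theory Submission
  imports Defs
begin

text \<open>With u, v the unit directions of the two sides at the apex, f(x) - D depends only on
z = x - a: it is \<open>\<parallel>z\<parallel>\<close> inside the wedge spanned by u and v, and the larger of
\<open>z \<bullet> u\<close>, \<open>z \<bullet> v\<close> outside it. This is the support function
\<open>z \<mapsto> max {z \<bullet> w | w a unit vector of the wedge}\<close>, a maximum of 1-Lipschitz linear
functionals, hence 1-Lipschitz.\<close>

definition wedge :: "'a::real_vector \<Rightarrow> 'a \<Rightarrow> 'a set" where
  "wedge u v = {l *\<^sub>R u + m *\<^sub>R v | l m. l \<ge> 0 \<and> m \<ge> 0}"

lemma wedge_commute: "wedge u v = wedge v u"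
  unfolding wedge_def by (metis add.commute)

lemma independent_unit_pair:
  fixes u v :: "'a::real_inner"
  assumes "norm u = 1" "norm v = 1" "\<bar>u \<bullet> v\<bar> < 1"
  shows "independent {u, v}"
proof -
  have "u \<notin> span {v}"
  proof
    assume "u \<in> span {v}"
    then obtain k where u: "u = k *\<^sub>R v" by (auto simp: span_singleton)
    hence "\<bar>k\<bar> = 1" using assms(1,2) by simp
    moreover have "u \<bullet> v = k" using assms(2) by (simp add: u norm_eq_1)
    ultimately show False using assms(3) by simp
  qed
  moreover have "v \<noteq> 0" using assms(2) by auto
  ultimately show ?thesis by (simp add: independent_insert)
qed

lemma independent_pair_spans_plane:
  fixes u v z :: "real^2"
  assumes "independent {u, v}" "u \<noteq> v"
  shows "\<exists>p q. z = p *\<^sub>R u + q *\<^sub>R v"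
proof -
  have "UNIV \<subseteq> span {u, v}"
    using card_ge_dim_independent[of "{u, v}" UNIV] assms by simp
  then have "z \<in> span {u, v}" by blast
  then show ?thesis by (auto simp: span_insert span_singleton algebra_simps)
qed

lemma inner_wedge_unit_le_inner_edge:
  fixes u v w z :: "real^2"
  assumes nu: "norm u = 1" and nv: "norm v = 1" and uv: "\<bar>u \<bullet> v\<bar> < 1"
    and w: "w \<in> wedge u v" and nw: "norm w = 1"
    and z: "z \<notin> wedge u v" and zuv: "z \<bullet> v \<le> z \<bullet> u"
  shows "z \<bullet> w \<le> z \<bullet> u"
proof -
  define k where "k = u \<bullet> v"
  obtain la mu where w_eq: "w = la *\<^sub>R u + mu *\<^sub>R v" and "la \<ge> 0" "mu \<ge> 0"
    using w unfolding wedge_def by blast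
  have "u \<noteq> v" using nu uv by (auto simp: norm_eq_1)
  then obtain p q where z_eq: "z = p *\<^sub>R u + q *\<^sub>R v"
    using independent_pair_spans_plane independent_unit_pair[OF nu nv uv] by blast
  have uu: "u \<bullet> u = 1" and vv: "v \<bullet> v = 1" using nu nv by (simp_all add: norm_eq_1)
  have vu: "v \<bullet> u = k" by (simp add: k_def inner_commute)
  have zu: "z \<bullet> u = p + q * k" and zv: "z \<bullet> v = p * k + q"
    using uu vv vu by (simp_all add: z_eq inner_add_left k_def)
  have zw: "z \<bullet> w = la * (p + q * k) + mu * (p * k + q)"
    using zu zv by (simp add: w_eq inner_add_right)
  have "0 \<le> (p - q) * (1 - k)" using zuv zu zv by (simp add: algebra_simps)
  hence p_ge_q: "q \<le> p" using uv k_def by (auto simp: zero_le_mult_iff abs_less_iff)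
  have "\<not> (0 \<le> p \<and> 0 \<le> q)" using z z_eq unfolding wedge_def by blast
  hence q_neg: "q < 0" using p_ge_q by linarith
  have "w \<bullet> u = la + mu * k" using uu vu by (simp add: w_eq inner_add_left)
  hence la_mu_k: "la + mu * k \<le> 1"
    using norm_cauchy_schwarz[of w u] nw nu by simp
  have "1 \<le> la + mu"
    using norm_triangle_ineq[of "la *\<^sub>R u" "mu *\<^sub>R v"] nw nu nv \<open>la \<ge> 0\<close> \<open>mu \<ge> 0\<close>
    by (simp add: w_eq)
  \<comment> \<open>Both summands of the identity below are nonpositive: \<open>w \<bullet> u \<le> 1\<close> and \<open>la + mu \<ge> 1\<close>.\<close>
  hence "q * ((1 + k) * (la + mu - 1)) \<le> 0"
    using q_neg uv k_def by (simp add: mult_nonpos_nonneg)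
  moreover have "(p - q) * (la + mu * k - 1) \<le> 0"
    using p_ge_q la_mu_k by (simp add: mult_nonneg_nonpos)
  moreover have "z \<bullet> w - z \<bullet> u = (p - q) * (la + mu * k - 1) + q * ((1 + k) * (la + mu - 1))"
    unfolding zw zu by (simp add: algebra_simps)
  ultimately show ?thesis by linarith
qed

definition arc_support :: "real^2 \<Rightarrow> real^2 \<Rightarrow> real^2 \<Rightarrow> real" where
  "arc_support u v z = (if z \<in> wedge u v then norm z else max (z \<bullet> u) (z \<bullet> v))"

lemma inner_wedge_unit_le_arc_support:
  fixes u v w z :: "real^2"
  assumes nu: "norm u = 1" and nv: "norm v = 1" and uv: "\<bar>u \<bullet> v\<bar> < 1"
    and w: "w \<in> wedge u v" and nw: "norm w = 1"
  shows "z \<bullet> w \<le> arc_support u v z"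
proof (cases "z \<in> wedge u v")
  case True
  then show ?thesis using norm_cauchy_schwarz[of z w] nw by (simp add: arc_support_def)
next
  case outside: False
  consider "z \<bullet> v \<le> z \<bullet> u" | "z \<bullet> u \<le> z \<bullet> v" by linarith
  then show ?thesis
  proof cases
    case 1
    then show ?thesis
      using inner_wedge_unit_le_inner_edge[OF nu nv uv w nw outside] outside
      by (simp add: arc_support_def)
  next
    case 2
    then show ?thesis
      using inner_wedge_unit_le_inner_edge[OF nv nu _ _ nw, of z] uv w outside
      by (simp add: arc_support_def wedge_commute inner_commute)
  qed
qed

lemma arc_support_attained:
  fixes u v z :: "real^2"
  assumes nu: "norm u = 1" and nv: "norm v = 1"
  obtains w where "w \<in> wedge u v" "norm w = 1" "arc_support u v z = z \<bullet> w"
proof -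
  have u_in: "u \<in> wedge u v"
    unfolding wedge_def by (intro CollectI exI[of _ 1] exI[of _ 0]) simp
  have v_in: "v \<in> wedge u v"
    unfolding wedge_def by (intro CollectI exI[of _ 0] exI[of _ 1]) simp
  show ?thesis
  proof (cases "z \<in> wedge u v \<and> z \<noteq> 0")
    case True
    then obtain l m where lm: "z = l *\<^sub>R u + m *\<^sub>R v" "l \<ge> 0" "m \<ge> 0"
      unfolding wedge_def by blast
    define n where "n = norm z"
    have "n > 0" using True n_def by simp
    have "(1 / n) *\<^sub>R z = (l / n) *\<^sub>R u + (m / n) *\<^sub>R v"
      using lm by (simp add: scaleR_add_right)
    hence "(1 / n) *\<^sub>R z \<in> wedge u v"
      using lm \<open>n > 0\<close> unfolding wedge_def by fastforce
    moreover have "norm ((1 / n) *\<^sub>R z) = 1" using \<open>n > 0\<close> n_def by simp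
    moreover have "arc_support u v z = z \<bullet> ((1 / n) *\<^sub>R z)"
      using True \<open>n > 0\<close> n_def by (simp add: arc_support_def dot_square_norm power2_eq_square)
    ultimately show ?thesis by (rule that)
  next
    case False
    then show ?thesis
      using that[OF u_in nu] that[OF v_in nv]
      by (cases "z \<bullet> v \<le> z \<bullet> u") (auto simp: arc_support_def max_def)
  qed
qed

lemma arc_support_lipschitz:
  fixes u v x y :: "real^2"
  assumes nu: "norm u = 1" and nv: "norm v = 1" and uv: "\<bar>u \<bullet> v\<bar> < 1"
  shows "\<bar>arc_support u v x - arc_support u v y\<bar> \<le> norm (x - y)"
proof -
  have "arc_support u v x - arc_support u v y \<le> norm (x - y)" for x y
  proof -
    obtain w where w: "w \<in> wedge u v" "norm w = 1" "arc_support u v x = x \<bullet> w"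
      using arc_support_attained[OF nu nv] by blast
    have "y \<bullet> w \<le> arc_support u v y"
      using inner_wedge_unit_le_arc_support[OF nu nv uv w(1,2)] .
    moreover have "(x - y) \<bullet> w \<le> norm (x - y) * norm w" by (rule norm_cauchy_schwarz)
    ultimately show ?thesis using w by (simp add: inner_diff_left)
  qed
  from this[of x y] this[of y x] show ?thesis by (simp add: norm_minus_commute)
qed

lemma f_tri_eq_arc_support:
  assumes "b \<noteq> a" and "c \<noteq> a"
  shows "f_tri a b c D x = D + arc_support (dir1 a b) (dir1 a c) (x - a)"
proof -
  have "norm (proj_line a (dir1 a y) x - a) = \<bar>(x - a) \<bullet> dir1 a y\<bar>" if "y \<noteq> a" for y
    using that by (simp add: proj_line_def dir1_def)
  moreover have "x \<in> Rin a b c \<longleftrightarrow> x - a \<in> wedge (dir1 a b) (dir1 a c)"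
    unfolding Rin_def wedge_def by (auto simp: algebra_simps)
  ultimately show ?thesis
    using assms
    unfolding f_tri_def hat_def Ltop_def Rtop_def Lreg_def Rreg_def arc_support_def
    by (auto simp: max_def)
qed

lemma abs_inner_dir1_less_1:
  assumes "b \<noteq> a" and "c \<noteq> a" and "0 < angle_at b a c" and "angle_at b a c < pi"
  shows "\<bar>dir1 a b \<bullet> dir1 a c\<bar> < 1"
proof -
  let ?k = "dir1 a b \<bullet> dir1 a c"
  have "angle_at b a c = arccos ?k" by (simp add: angle_at_def dir1_def mult.commute)
  hence "?k \<noteq> 1" and "?k \<noteq> -1" using assms(3,4) by auto
  moreover have "\<bar>?k\<bar> \<le> 1"
    using Cauchy_Schwarz_ineq2[of "dir1 a b" "dir1 a c"] assms(1,2) by (simp add: dir1_def)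
  ultimately show ?thesis by linarith
qed

theorem mainTheorem8:
  fixes a b c x1 x2 :: "real^2" and D :: real
  assumes "b \<noteq> a" and "c \<noteq> a"
    and "0 < angle_at b a c" and "angle_at b a c < pi"
    and "0 \<le> D"
  shows "\<bar>f_tri a b c D x1 - f_tri a b c D x2\<bar> \<le> norm (x1 - x2)"
proof -
  have "norm (dir1 a b) = 1" and "norm (dir1 a c) = 1"
    using assms(1,2) by (simp_all add: dir1_def)
  with abs_inner_dir1_less_1[OF assms(1-4)] show ?thesis
    using arc_support_lipschitz[of "dir1 a b" "dir1 a c" "x1 - a" "x2 - a"]
    by (simp add: f_tri_eq_arc_support[OF assms(1,2)])
qed

end
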